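(* Let $\Sigma$ be a flag complex on $[n]$ and let $\ell$ be a positive integer. Let $\Delta$ and $\Delta'$ be the simplicial complexes (collections of subsets of $[n]$ closed under taking subsets) defined by $I_\Delta=I(\overline{\mathrm{skel}_\Sigma(\ell)})$ and $I_{\Delta'}=I(\overline{\mathrm{skel}_\Sigma(1)})$. If $I_{\Delta'}$ has linear quotients, then so does $I_\Delta$.
   Context: $S=K[x_1,\ldots,x_n]$ over a field $K$, $x_F=\prod_{i\in F}x_i$. For a simplicial complex $\Gamma$, $I_\Gamma$ (Stanley–Reisner ideal) is generated by all $x_F$ with $F\notin\Gamma$, and $I(\Gamma)$ (facet ideal) by the $x_F$ with $F$ a facet of $\Gamma$. $\Sigma$ is flag if all minimal nonfaces have two elements (the simplex counts as flag). For $k\geq1$, $\overline{\mathrm{skel}_\Sigma(k)}$ is the complex whose facets are the $(k+1)$-subsets of $[n]$ not in $\Sigma$. A monomial ideal has linear quotients if its minimal monomial generators can be ordered $f_1,\ldots,f_m$ so that for each $i>1$ the colon ideal $(f_1,\ldots,f_{i-1}):f_i$ is generated by variables. *)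

theory Defs
  imports Main "HOL-Library.Multiset"
begin

text \<open>Monomials in K[x_1,...,x_n] are modelled as multisets of variable indices
  (exponent vectors); product is +, divisibility is subset_mset.
  A monomial ideal is represented by the set of monomials it contains
  (which determines it); the field K plays no role.\<close>

type_synonym monomial = "nat multiset"

definition xF :: "nat set \<Rightarrow> monomial" where
  "xF F = mset_set F"

definition var :: "nat \<Rightarrow> monomial" where
  "var i = {#i#}"

definition mon_ideal :: "monomial set \<Rightarrow> monomial set" where
  "mon_ideal G = {m. \<exists>g\<in>G. g \<subseteq># m}"

definition colon :: "monomial set \<Rightarrow> monomial \<Rightarrow> monomial set" where
  "colon I f = {m. m + f \<in> I}"

definition generated_by_variables :: "monomial set \<Rightarrow> bool" where
  "generated_by_variables I \<longleftrightarrow> (\<exists>V. I = mon_ideal (var ` V))"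

definition min_gens :: "monomial set \<Rightarrow> monomial set" where
  "min_gens I = {m \<in> I. \<forall>m'\<in>I. m' \<subseteq># m \<longrightarrow> m' = m}"

definition linear_quotients :: "monomial set \<Rightarrow> bool" where
  "linear_quotients I \<longleftrightarrow>
     (\<exists>fs. distinct fs \<and> set fs = min_gens I \<and>
        (\<forall>i. 0 < i \<and> i < length fs \<longrightarrow>
            generated_by_variables (colon (mon_ideal (set (take i fs))) (fs ! i))))"

definition simplicial_complex :: "nat \<Rightarrow> nat set set \<Rightarrow> bool" where
  "simplicial_complex n \<Gamma> \<longleftrightarrow> \<Gamma> \<subseteq> Pow {1..n} \<and> (\<forall>F\<in>\<Gamma>. \<forall>G. G \<subseteq> F \<longrightarrow> G \<in> \<Gamma>)"

definition minimal_nonface :: "nat \<Rightarrow> nat set set \<Rightarrow> nat set \<Rightarrow> bool" where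
  "minimal_nonface n \<Gamma> F \<longleftrightarrow> F \<subseteq> {1..n} \<and> F \<notin> \<Gamma> \<and> (\<forall>G. G \<subset> F \<longrightarrow> G \<in> \<Gamma>)"

definition flag :: "nat \<Rightarrow> nat set set \<Rightarrow> bool" where
  "flag n \<Sigma> \<longleftrightarrow> simplicial_complex n \<Sigma> \<and>
     (\<forall>F. minimal_nonface n \<Sigma> F \<longrightarrow> card F = 2)"

definition facets :: "nat set set \<Rightarrow> nat set set" where
  "facets \<Gamma> = {F \<in> \<Gamma>. \<forall>G\<in>\<Gamma>. F \<subseteq> G \<longrightarrow> G = F}"

definition SR_ideal :: "nat \<Rightarrow> nat set set \<Rightarrow> monomial set" where
  "SR_ideal n \<Gamma> = mon_ideal {xF F | F. F \<subseteq> {1..n} \<and> F \<notin> \<Gamma>}"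

definition facet_ideal :: "nat set set \<Rightarrow> monomial set" where
  "facet_ideal \<Gamma> = mon_ideal (xF ` facets \<Gamma>)"

definition skel_bar :: "nat \<Rightarrow> nat set set \<Rightarrow> nat \<Rightarrow> nat set set" where
  "skel_bar n \<Sigma> k = {G. \<exists>F. F \<subseteq> {1..n} \<and> card F = k + 1 \<and> F \<notin> \<Sigma> \<and> G \<subseteq> F}"

end

theory Submission
  imports Defs "HOL-Library.Product_Lexorder"
begin

(* For squarefree minimal generators x_F, the colon ideal (x_F1, ..., x_F(i-1)) : x_Fi
  is generated by variables iff every earlier F_j is matched by an earlier F_k contained in
  F_i plus one vertex v of F_j - F_i; so linear quotients is a purely combinatorial exchange
  property of an ordering of the sets. Let e_1, ..., e_m be such an ordering of the non-edges
  of Sigma. Since Sigma is flag, every (l+1)-subset F not in Sigma contains some non-edge;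
  order these F lexicographically by the index of the first non-edge they contain and then by
  the sum of their elements. If F_j precedes F_i, exchanging one vertex of F_i for a vertex v
  of F_j gives an earlier nonface F_k: when the first non-edges differ, v comes from the
  exchange property of the non-edge ordering; when they agree, a smaller vertex of F_j
  replaces a larger one of F_i outside the common non-edge, which lowers the sum. *)

definition linear_quotient_order :: "'a set list \<Rightarrow> bool" where
  "linear_quotient_order Fs \<longleftrightarrow>
     (\<forall>i<length Fs. \<forall>j<i. \<exists>k<i. \<exists>v\<in>Fs ! j - Fs ! i. Fs ! k \<subseteq> insert v (Fs ! i))"

lemma min_gens_mon_ideal_antichain:
  assumes "\<And>g h. g \<in> G \<Longrightarrow> h \<in> G \<Longrightarrow> g \<subseteq># h \<Longrightarrow> g = h"
  shows "min_gens (mon_ideal G) = G"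
proof
  have generator: "g \<in> mon_ideal G" if "g \<in> G" for g
    unfolding mon_ideal_def using that by blast
  show "min_gens (mon_ideal G) \<subseteq> G"
  proof
    fix m assume m: "m \<in> min_gens (mon_ideal G)"
    then obtain g where "g \<in> G" "g \<subseteq># m"
      unfolding min_gens_def mon_ideal_def by blast
    moreover from this have "g = m"
      using m generator unfolding min_gens_def by simp
    ultimately show "m \<in> G"
      by simp
  qed
  have "m = g" if "g \<in> G" "m \<in> mon_ideal G" "m \<subseteq># g" for g m
  proof -
    obtain h where "h \<in> G" "h \<subseteq># m"
      using \<open>m \<in> mon_ideal G\<close> unfolding mon_ideal_def by blast
    then have "h = g"
      using that assms subset_mset.order_trans by meson
    with \<open>h \<subseteq># m\<close> \<open>m \<subseteq># g\<close> show "m = g"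
      by simp
  qed
  with generator show "G \<subseteq> min_gens (mon_ideal G)"
    unfolding min_gens_def by auto
qed

lemma colon_generated_by_variables_iff:
  assumes "i < length fs"
  shows "generated_by_variables (colon (mon_ideal (set (take i fs))) (fs ! i)) \<longleftrightarrow>
    (\<forall>j<i. \<exists>k<i. \<exists>v. v \<in># fs ! j - fs ! i \<and> fs ! k \<subseteq># fs ! i + {#v#})"
    (is "generated_by_variables ?C \<longleftrightarrow> ?exchange")
proof -
  have earlier: "set (take i fs) = (!) fs ` {..<i}"
    using assms nth_image[of i fs] by (simp add: lessThan_atLeast0)
  have in_colon: "m \<in> ?C \<longleftrightarrow> (\<exists>k<i. fs ! k \<subseteq># m + fs ! i)" for m
    unfolding colon_def mon_ideal_def earlier by auto
  show ?thesis
  proof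
    assume "generated_by_variables ?C"
    then obtain V where V: "?C = mon_ideal (var ` V)"
      unfolding generated_by_variables_def by blast
    show ?exchange
    proof (intro allI impI)
      fix j assume "j < i"
      then have "fs ! j - fs ! i \<in> mon_ideal (var ` V)"
        using in_colon V by (auto simp: subset_eq_diff_conv[symmetric])
      then obtain v where "v \<in> V" and v: "v \<in># fs ! j - fs ! i"
        unfolding mon_ideal_def var_def by auto
      then have "var v \<in> mon_ideal (var ` V)"
        unfolding mon_ideal_def by blast
      then have "var v \<in> ?C"
        using V by simp
      then obtain k where "k < i" "fs ! k \<subseteq># fs ! i + {#v#}"
        unfolding in_colon by (auto simp: var_def add.commute)
      with v show "\<exists>k<i. \<exists>v. v \<in># fs ! j - fs ! i \<and> fs ! k \<subseteq># fs ! i + {#v#}"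
        by blast
    qed
  next
    assume exchange: ?exchange
    define V where "V = {v. \<exists>k<i. fs ! k \<subseteq># fs ! i + {#v#}}"
    have "?C = mon_ideal (var ` V)"
    proof (rule set_eqI, rule iffI)
      fix m assume "m \<in> ?C"
      then obtain j where "j < i" and "fs ! j - fs ! i \<subseteq># m"
        unfolding in_colon by (auto simp: subset_eq_diff_conv)
      moreover obtain k v where "k < i" "v \<in># fs ! j - fs ! i" "fs ! k \<subseteq># fs ! i + {#v#}"
        using exchange \<open>j < i\<close> by blast
      ultimately show "m \<in> mon_ideal (var ` V)"
        unfolding mon_ideal_def V_def var_def by (auto dest: mset_subset_eqD)
    next
      fix m assume "m \<in> mon_ideal (var ` V)"
      then obtain v k where "{#v#} \<subseteq># m" "k < i" "fs ! k \<subseteq># fs ! i + {#v#}"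
        unfolding mon_ideal_def V_def var_def by blast
      then show "m \<in> ?C"
        unfolding in_colon
        by (metis add.commute subset_mset.add_left_mono subset_mset.order_trans)
    qed
    then show "generated_by_variables ?C"
      unfolding generated_by_variables_def by blast
  qed
qed

lemma xF_exchange_iff:
  assumes "finite Fi" "finite Fj" "finite Fk"
  shows "v \<in># xF Fj - xF Fi \<and> xF Fk \<subseteq># xF Fi + {#v#} \<longleftrightarrow>
    v \<in> Fj - Fi \<and> Fk \<subseteq> insert v Fi"
proof (cases "v \<in> Fi")
  case False
  then have "xF Fi + {#v#} = xF (insert v Fi)"
    using assms by (simp add: xF_def)
  then show ?thesis
    using assms by (simp add: xF_def msubset_mset_set_iff in_diff_count count_mset_set')
qed (use assms in \<open>simp add: xF_def in_diff_count count_mset_set'\<close>)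

lemma linear_quotients_iff_linear_quotient_order:
  assumes gens: "min_gens I = xF ` \<F>" and fin: "\<And>F. F \<in> \<F> \<Longrightarrow> finite F"
  shows "linear_quotients I \<longleftrightarrow> (\<exists>Fs. distinct Fs \<and> set Fs = \<F> \<and> linear_quotient_order Fs)"
proof -
  have xF_inverse: "set_mset (xF F) = F" if "F \<in> \<F>" for F
    using fin that by (simp add: xF_def)
  then have inj: "inj_on xF \<F>"
    by (metis inj_on_inverseI)
  have order_iff: "linear_quotient_order Fs \<longleftrightarrow>
      (\<forall>i. 0 < i \<and> i < length (map xF Fs) \<longrightarrow>
        generated_by_variables (colon (mon_ideal (set (take i (map xF Fs)))) (map xF Fs ! i)))"
    if "set Fs \<subseteq> \<F>" for Fs
  proof -
    have "finite (Fs ! m)" if "m < length Fs" for m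
      using fin \<open>set Fs \<subseteq> \<F>\<close> that nth_mem by blast
    then have exchange_iff: "(\<exists>v. v \<in># map xF Fs ! j - map xF Fs ! i \<and>
          map xF Fs ! k \<subseteq># map xF Fs ! i + {#v#}) \<longleftrightarrow>
        (\<exists>v\<in>Fs ! j - Fs ! i. Fs ! k \<subseteq> insert v (Fs ! i))"
      if "i < length Fs" "j < i" "k < i" for i j k
      using that xF_exchange_iff[of "Fs ! i" "Fs ! j" "Fs ! k"] by auto
    have "generated_by_variables
        (colon (mon_ideal (set (take i (map xF Fs)))) (map xF Fs ! i)) \<longleftrightarrow>
        (\<forall>j<i. \<exists>k<i. \<exists>v\<in>Fs ! j - Fs ! i. Fs ! k \<subseteq> insert v (Fs ! i))"
      if "i < length Fs" for i
      using that exchange_iff[OF that]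
      by (simp only: colon_generated_by_variables_iff length_map) blast
    then show ?thesis
      unfolding linear_quotient_order_def by auto
  qed
  show ?thesis
  proof
    assume "linear_quotients I"
    then obtain fs where fs: "distinct fs" "set fs = xF ` \<F>"
      "\<forall>i. 0 < i \<and> i < length fs \<longrightarrow>
         generated_by_variables (colon (mon_ideal (set (take i fs))) (fs ! i))"
      unfolding linear_quotients_def gens by blast
    define Fs where "Fs = map set_mset fs"
    have "map xF Fs = fs"
      unfolding Fs_def map_map using fs(2) xF_inverse by (intro map_idI) auto
    moreover have "set Fs = \<F>"
      unfolding Fs_def using fs(2) xF_inverse by (auto simp: image_comp)
    ultimately show "\<exists>Fs. distinct Fs \<and> set Fs = \<F> \<and> linear_quotient_order Fs"
      using fs order_iff by (metis distinct_map order_refl)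
  next
    assume "\<exists>Fs. distinct Fs \<and> set Fs = \<F> \<and> linear_quotient_order Fs"
    then obtain Fs where "distinct Fs" "set Fs = \<F>" "linear_quotient_order Fs"
      by blast
    then show "linear_quotients I"
      unfolding linear_quotients_def gens using inj order_iff
      by (metis distinct_map list.set_map order_refl)
  qed
qed

definition nonfaces :: "nat \<Rightarrow> nat set set \<Rightarrow> nat \<Rightarrow> nat set set" where
  "nonfaces n \<Sigma> k = {F. F \<subseteq> {1..n} \<and> card F = k \<and> F \<notin> \<Sigma>}"

lemma finite_nonfaces: "finite (nonfaces n \<Sigma> k)"
  unfolding nonfaces_def by (rule finite_subset[of _ "Pow {1..n}"]) auto

lemma finite_in_nonfaces: "F \<in> nonfaces n \<Sigma> k \<Longrightarrow> finite F"
  unfolding nonfaces_def using finite_subset by blast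

lemma facets_skel_bar: "facets (skel_bar n \<Sigma> k) = nonfaces n \<Sigma> (k + 1)"
proof (rule set_eqI, rule iffI)
  fix F assume F: "F \<in> facets (skel_bar n \<Sigma> k)"
  then obtain F' where F': "F' \<subseteq> {1..n}" "card F' = k + 1" "F' \<notin> \<Sigma>" "F \<subseteq> F'"
    unfolding facets_def skel_bar_def by blast
  then have "F' \<in> skel_bar n \<Sigma> k"
    unfolding skel_bar_def by blast
  with F F' have "F' = F"
    unfolding facets_def by blast
  with F' show "F \<in> nonfaces n \<Sigma> (k + 1)"
    unfolding nonfaces_def by blast
next
  fix F assume F: "F \<in> nonfaces n \<Sigma> (k + 1)"
  have "G = F" if "G \<in> skel_bar n \<Sigma> k" "F \<subseteq> G" for G
  proof -
    obtain F' where F': "F' \<subseteq> {1..n}" "card F' = k + 1" "G \<subseteq> F'"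
      using \<open>G \<in> skel_bar n \<Sigma> k\<close> unfolding skel_bar_def by blast
    have "F = F'"
      using F F' \<open>F \<subseteq> G\<close> card_subset_eq[of F' F] finite_subset[of F' "{1..n}"]
      unfolding nonfaces_def by auto
    with F' that show ?thesis
      by blast
  qed
  moreover have "F \<in> skel_bar n \<Sigma> k"
    using F unfolding nonfaces_def skel_bar_def by blast
  ultimately show "F \<in> facets (skel_bar n \<Sigma> k)"
    unfolding facets_def by blast
qed

lemma min_gens_facet_ideal_skel_bar:
  "min_gens (facet_ideal (skel_bar n \<Sigma> k)) = xF ` nonfaces n \<Sigma> (k + 1)"
  unfolding facet_ideal_def facets_skel_bar
proof (rule min_gens_mon_ideal_antichain)
  fix g h assume "g \<in> xF ` nonfaces n \<Sigma> (k + 1)" "h \<in> xF ` nonfaces n \<Sigma> (k + 1)" "g \<subseteq># h"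
  then obtain F G where F: "F \<in> nonfaces n \<Sigma> (k + 1)" "g = xF F"
    and G: "G \<in> nonfaces n \<Sigma> (k + 1)" "h = xF G"
    and "xF F \<subseteq># xF G"
    by blast
  then have "F \<subseteq> G"
    using finite_in_nonfaces by (simp add: xF_def msubset_mset_set_iff)
  moreover have "card F = card G"
    using F G unfolding nonfaces_def by simp
  ultimately have "F = G"
    using card_subset_eq finite_in_nonfaces[OF G(1)] by blast
  with F G show "g = h"
    by simp
qed

lemma flag_nonface_contains_nonedge:
  assumes flag: "flag n \<Sigma>" and F: "F \<subseteq> {1..n}" "F \<notin> \<Sigma>"
  shows "\<exists>e\<in>nonfaces n \<Sigma> 2. e \<subseteq> F"
proof -
  obtain G where G: "G \<subseteq> F" "G \<notin> \<Sigma>"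
    and least: "\<And>H. H \<subseteq> F \<Longrightarrow> H \<notin> \<Sigma> \<Longrightarrow> card G \<le> card H"
    using ex_has_least_nat[of "\<lambda>G. G \<subseteq> F \<and> G \<notin> \<Sigma>" F card] F by auto
  have "finite G"
    using F(1) G(1) by (meson finite_atLeastAtMost finite_subset)
  have "H \<in> \<Sigma>" if "H \<subset> G" for H
  proof (rule ccontr)
    assume "H \<notin> \<Sigma>"
    have "H \<subseteq> F"
      using that G by blast
    then have "card G \<le> card H"
      using \<open>H \<notin> \<Sigma>\<close> by (rule least)
    with psubset_card_mono[OF \<open>finite G\<close> that] show False
      by simp
  qed
  then have "minimal_nonface n \<Sigma> G"
    unfolding minimal_nonface_def using G F by blast
  then have "card G = 2"
    using flag unfolding flag_def by blast
  with G F show ?thesis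
    unfolding nonfaces_def by blast
qed

lemma exchange_in_nonfaces:
  assumes "simplicial_complex n \<Sigma>" "F \<in> nonfaces n \<Sigma> k" "u \<in> F" "v \<in> {1..n}" "v \<notin> F"
    and "e \<notin> \<Sigma>" "e \<subseteq> insert v (F - {u})"
  shows "insert v (F - {u}) \<in> nonfaces n \<Sigma> k"
proof -
  have "finite F"
    using assms(2) by (rule finite_in_nonfaces)
  then have "card (insert v (F - {u})) = Suc (card (F - {u}))"
    using assms(5) by simp
  also have "\<dots> = card F"
    using \<open>finite F\<close> assms(3) by (rule card_Suc_Diff1)
  finally have "card (insert v (F - {u})) = card F" .
  moreover have "insert v (F - {u}) \<notin> \<Sigma>"
    using assms(1,6,7) unfolding simplicial_complex_def by blast
  ultimately show ?thesis
    using assms(2,4) unfolding nonfaces_def by auto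
qed

lemma sum_exchange_less:
  fixes F :: "'a::ordered_cancel_comm_monoid_add set"
  assumes "finite F" "u \<in> F" "v \<notin> F" "v < u"
  shows "\<Sum>(insert v (F - {u})) < \<Sum>F"
proof -
  have "\<Sum>(insert v (F - {u})) = v + \<Sum>(F - {u})"
    using assms by simp
  also have "\<dots> < u + \<Sum>(F - {u})"
    using assms(4) by (rule add_strict_right_mono)
  also have "\<dots> = \<Sum>F"
    using assms(1,2) by (simp add: sum.remove)
  finally show ?thesis .
qed

lemma exchange_with_smaller_element:
  fixes A C :: "nat set"
  assumes "finite A" "finite C" "card A = card C" "A \<noteq> C" "\<Sum>A \<le> \<Sum>C"
  shows "\<exists>v\<in>A - C. \<exists>u\<in>C - A. v < u"
proof (rule ccontr)
  assume no_exchange: "\<not> ?thesis"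
  have smaller: "u < v" if "v \<in> A - C" "u \<in> C - A" for u v
  proof -
    have "\<not> v < u" "v \<noteq> u"
      using that no_exchange by auto
    then show ?thesis
      by simp
  qed
  have "A - C \<noteq> {}"
    using assms card_subset_eq by blast
  have card_diff: "card (A - C) = card (C - A)"
    using assms by (simp add: card_Diff_subset_Int Int_commute)
  define m where "m = Min (A - C)"
  have m: "m \<in> A - C" "\<And>x. x \<in> A - C \<Longrightarrow> m \<le> x"
    unfolding m_def using Min_in[OF _ \<open>A - C \<noteq> {}\<close>] Min_le assms(1) by blast+
  have "C - A \<noteq> {}"
    using \<open>A - C \<noteq> {}\<close> card_diff assms(1,2) by (metis card_0_eq finite_Diff)
  then have "\<Sum>(C - A) < of_nat (card (C - A)) * m"
    using sum_bounded_above_strict[of "C - A" id m] smaller[OF m(1)] assms(2)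
    by (simp add: card_gt_0_iff)
  also have "\<dots> \<le> \<Sum>(A - C)"
    using sum_bounded_below[of "A - C" m id] m card_diff by simp
  finally have "\<Sum>(C - A) < \<Sum>(A - C)" .
  moreover have "\<Sum>A = \<Sum>(A \<inter> C) + \<Sum>(A - C)" "\<Sum>C = \<Sum>(A \<inter> C) + \<Sum>(C - A)"
    using assms(1,2) sum.Int_Diff[of A id C] sum.Int_Diff[of C id A] by (auto simp: Int_commute)
  ultimately show False
    using assms(5) by linarith
qed

definition first_contained :: "'a set list \<Rightarrow> 'a set \<Rightarrow> nat" where
  "first_contained Es F = (LEAST p. p < length Es \<and> Es ! p \<subseteq> F)"

lemma first_contained_correct:
  assumes "e \<in> set Es" "e \<subseteq> F"
  shows "first_contained Es F < length Es \<and> Es ! first_contained Es F \<subseteq> F"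
proof -
  obtain p where "p < length Es" "Es ! p = e"
    using assms(1) by (auto simp: in_set_conv_nth)
  with assms(2) have "p < length Es \<and> Es ! p \<subseteq> F"
    by simp
  then show ?thesis
    unfolding first_contained_def by (rule LeastI)
qed

lemma first_contained_le: "p < length Es \<Longrightarrow> Es ! p \<subseteq> F \<Longrightarrow> first_contained Es F \<le> p"
  unfolding first_contained_def by (simp add: Least_le)

lemma exchange_lowers_first_contained:
  assumes sc: "simplicial_complex n \<Sigma>"
    and Es: "set Es \<subseteq> nonfaces n \<Sigma> 2" "linear_quotient_order Es"
    and Fi: "Fi \<in> nonfaces n \<Sigma> k" "2 \<le> k" "e \<in> set Es" "e \<subseteq> Fi"
    and Fj: "a < first_contained Es Fi" "Es ! a \<subseteq> Fj"
  shows "\<exists>Fk\<in>nonfaces n \<Sigma> k. first_contained Es Fk < first_contained Es Fi \<and>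
    (\<exists>v\<in>Fj - Fi. Fk \<subseteq> insert v Fi)"
proof -
  define p where "p = first_contained Es Fi"
  have p: "p < length Es" "Es ! p \<subseteq> Fi"
    using first_contained_correct[OF Fi(3,4)] unfolding p_def by auto
  obtain b v where b: "b < p" "Es ! b \<subseteq> insert v (Es ! p)" and v: "v \<in> Es ! a - Es ! p"
    using Es(2) p(1) Fj(1) unfolding linear_quotient_order_def p_def by blast
  have nonedge: "Es ! m \<in> nonfaces n \<Sigma> 2" if "m < length Es" for m
    using Es(1) nth_mem[OF that] by blast
  have "b < length Es" "a < length Es"
    using b(1) Fj(1) p(1) unfolding p_def by simp_all
  have "\<not> Es ! b \<subseteq> Fi"
    using first_contained_le[of b Es Fi] b(1) p(1) unfolding p_def by linarith
  then have "v \<notin> Fi"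
    using b(2) p(2) by blast
  have "\<not> Fi \<subseteq> Es ! b"
  proof
    assume "Fi \<subseteq> Es ! b"
    moreover have "finite (Es ! b)"
      using finite_in_nonfaces[OF nonedge[OF \<open>b < length Es\<close>]] .
    moreover have "card (Es ! b) \<le> card Fi"
      using nonedge[OF \<open>b < length Es\<close>] Fi(1,2) unfolding nonfaces_def by simp
    ultimately show False
      using \<open>\<not> Es ! b \<subseteq> Fi\<close> card_seteq by blast
  qed
  then obtain u where "u \<in> Fi" "u \<notin> Es ! b"
    by blast
  define Fk where "Fk = insert v (Fi - {u})"
  have "Es ! b \<subseteq> Fk"
    unfolding Fk_def using b(2) p(2) \<open>u \<notin> Es ! b\<close> by blast
  moreover have "v \<in> {1..n}"
    using nonedge[OF \<open>a < length Es\<close>] v unfolding nonfaces_def by blast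
  moreover have "Es ! b \<notin> \<Sigma>"
    using nonedge[OF \<open>b < length Es\<close>] unfolding nonfaces_def by blast
  ultimately have "Fk \<in> nonfaces n \<Sigma> k"
    unfolding Fk_def using exchange_in_nonfaces[OF sc Fi(1) \<open>u \<in> Fi\<close>] \<open>v \<notin> Fi\<close> by blast
  moreover have "first_contained Es Fk < p"
    using first_contained_le[OF _ \<open>Es ! b \<subseteq> Fk\<close>] b(1) p(1) by simp
  moreover have "v \<in> Fj - Fi" "Fk \<subseteq> insert v Fi"
    using v Fj(2) \<open>v \<notin> Fi\<close> unfolding Fk_def by auto
  ultimately show ?thesis
    unfolding p_def by blast
qed

lemma exchange_lowers_key:
  assumes flag: "flag n \<Sigma>" and Es: "set Es = nonfaces n \<Sigma> 2" "linear_quotient_order Es"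
    and k: "2 \<le> k" and Fi: "Fi \<in> nonfaces n \<Sigma> k" and Fj: "Fj \<in> nonfaces n \<Sigma> k" "Fj \<noteq> Fi"
    and le: "(first_contained Es Fj, \<Sum>Fj) \<le> (first_contained Es Fi, \<Sum>Fi)"
  shows "\<exists>Fk\<in>nonfaces n \<Sigma> k. (first_contained Es Fk, \<Sum>Fk) < (first_contained Es Fi, \<Sum>Fi) \<and>
    (\<exists>v\<in>Fj - Fi. Fk \<subseteq> insert v Fi)"
proof -
  have sc: "simplicial_complex n \<Sigma>"
    using flag unfolding flag_def by blast
  have contains_nonedge: "\<exists>e\<in>set Es. e \<subseteq> F" if "F \<in> nonfaces n \<Sigma> k" for F
    using flag_nonface_contains_nonedge[OF flag] that unfolding Es(1) nonfaces_def by blast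
  obtain ei where ei: "ei \<in> set Es" "ei \<subseteq> Fi"
    using contains_nonedge[OF Fi] by blast
  obtain ej where ej: "ej \<in> set Es" "ej \<subseteq> Fj"
    using contains_nonedge[OF Fj(1)] by blast
  define p where "p = first_contained Es Fi"
  have p: "p < length Es" "Es ! p \<subseteq> Fi"
    using first_contained_correct[OF ei] unfolding p_def by auto
  from le consider (earlier) "first_contained Es Fj < p"
    | (same) "first_contained Es Fj = p" "\<Sum>Fj \<le> \<Sum>Fi"
    unfolding p_def by fastforce
  then show ?thesis
  proof cases
    case earlier
    with first_contained_correct[OF ej] show ?thesis
      using exchange_lowers_first_contained[OF sc _ Es(2) Fi k ei, of "first_contained Es Fj" Fj]
      unfolding Es(1) p_def by fastforce
  next
    case same
    then have "Es ! p \<subseteq> Fj"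
      using first_contained_correct[OF ej] by simp
    have "card Fj = card Fi"
      using Fi Fj(1) unfolding nonfaces_def by simp
    then obtain v u where v: "v \<in> Fj - Fi" and u: "u \<in> Fi - Fj" and "v < u"
      using exchange_with_smaller_element[of Fj Fi] finite_in_nonfaces[OF Fi]
        finite_in_nonfaces[OF Fj(1)] Fj(2) same(2) by blast
    define Fk where "Fk = insert v (Fi - {u})"
    have "Es ! p \<subseteq> Fk"
      unfolding Fk_def using p(2) \<open>Es ! p \<subseteq> Fj\<close> u by blast
    moreover have "Es ! p \<notin> \<Sigma>"
      using Es(1) nth_mem[OF p(1)] unfolding nonfaces_def by blast
    moreover have "v \<in> {1..n}"
      using Fj(1) v unfolding nonfaces_def by blast
    ultimately have "Fk \<in> nonfaces n \<Sigma> k"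
      unfolding Fk_def using exchange_in_nonfaces[OF sc Fi] u v by blast
    moreover have "first_contained Es Fk \<le> p"
      using first_contained_le[OF p(1) \<open>Es ! p \<subseteq> Fk\<close>] .
    moreover have "\<Sum>Fk < \<Sum>Fi"
      unfolding Fk_def using sum_exchange_less finite_in_nonfaces[OF Fi] u v \<open>v < u\<close> by blast
    moreover have "Fk \<subseteq> insert v Fi"
      unfolding Fk_def by blast
    ultimately show ?thesis
      using v unfolding p_def by fastforce
  qed
qed

lemma linear_quotient_order_sort_key:
  fixes key :: "'a set \<Rightarrow> 'b::linorder"
  assumes "finite \<F>"
    and exchange: "\<And>Fi Fj. Fi \<in> \<F> \<Longrightarrow> Fj \<in> \<F> \<Longrightarrow> Fj \<noteq> Fi \<Longrightarrow> key Fj \<le> key Fi \<Longrightarrow>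
      \<exists>Fk\<in>\<F>. key Fk < key Fi \<and> (\<exists>v\<in>Fj - Fi. Fk \<subseteq> insert v Fi)"
  shows "\<exists>Fs. distinct Fs \<and> set Fs = \<F> \<and> linear_quotient_order Fs"
proof -
  obtain Fs0 where "set Fs0 = \<F>" "distinct Fs0"
    using finite_distinct_list[OF assms(1)] by blast
  define Fs where "Fs = sort_key key Fs0"
  have Fs: "distinct Fs" "set Fs = \<F>" "sorted (map key Fs)"
    unfolding Fs_def using \<open>set Fs0 = \<F>\<close> \<open>distinct Fs0\<close> by auto
  have "linear_quotient_order Fs"
    unfolding linear_quotient_order_def
  proof (intro allI impI)
    fix i j assume "i < length Fs" "j < i"
    then have "Fs ! i \<in> \<F>" "Fs ! j \<in> \<F>" "Fs ! j \<noteq> Fs ! i"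
      using Fs(1,2) nth_mem nth_eq_iff_index_eq by fastforce+
    moreover have "key (Fs ! j) \<le> key (Fs ! i)"
      using sorted_nth_mono[OF Fs(3), of j i] \<open>i < length Fs\<close> \<open>j < i\<close> by simp
    ultimately obtain Fk v where "Fk \<in> \<F>" "key Fk < key (Fs ! i)"
      and exch: "v \<in> Fs ! j - Fs ! i" "Fk \<subseteq> insert v (Fs ! i)"
      using exchange by blast
    then obtain k where k: "k < length Fs" "Fs ! k = Fk"
      using Fs(2) by (auto simp: in_set_conv_nth)
    have "k < i"
    proof (rule ccontr)
      assume "\<not> k < i"
      then have "key (Fs ! i) \<le> key (Fs ! k)"
        using sorted_nth_mono[OF Fs(3), of i k] k(1) by simp
      with k(2) \<open>key Fk < key (Fs ! i)\<close> show False
        by simp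
    qed
    with k(2) exch show "\<exists>k<i. \<exists>v\<in>Fs ! j - Fs ! i. Fs ! k \<subseteq> insert v (Fs ! i)"
      by blast
  qed
  with Fs(1,2) show ?thesis
    by blast
qed

theorem flag_nonfaces_linear_quotient_order:
  assumes "flag n \<Sigma>" "set Es = nonfaces n \<Sigma> 2" "linear_quotient_order Es" "2 \<le> k"
  shows "\<exists>Fs. distinct Fs \<and> set Fs = nonfaces n \<Sigma> k \<and> linear_quotient_order Fs"
  using finite_nonfaces exchange_lowers_key[OF assms]
  by (rule linear_quotient_order_sort_key[where key = "\<lambda>F. (first_contained Es F, \<Sum>F)"])

theorem corollary1p5:
  fixes n l :: nat and \<Sigma> \<Delta> \<Delta>' :: "nat set set"
  assumes "flag n \<Sigma>"
    and "l \<ge> 1"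
    and "simplicial_complex n \<Delta>"
    and "simplicial_complex n \<Delta>'"
    and "SR_ideal n \<Delta> = facet_ideal (skel_bar n \<Sigma> l)"
    and "SR_ideal n \<Delta>' = facet_ideal (skel_bar n \<Sigma> 1)"
    and "linear_quotients (SR_ideal n \<Delta>')"
  shows "linear_quotients (SR_ideal n \<Delta>)"
proof -
  have gens: "min_gens (SR_ideal n \<Delta>) = xF ` nonfaces n \<Sigma> (l + 1)"
    "min_gens (SR_ideal n \<Delta>') = xF ` nonfaces n \<Sigma> 2"
    unfolding assms(5,6) using min_gens_facet_ideal_skel_bar[of n \<Sigma> 1]
    by (simp_all only: min_gens_facet_ideal_skel_bar one_add_one)
  obtain Es where "set Es = nonfaces n \<Sigma> 2" "linear_quotient_order Es"
    using assms(7) finite_in_nonfaces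
      linear_quotients_iff_linear_quotient_order[OF gens(2)] by blast
  then have "\<exists>Fs. distinct Fs \<and> set Fs = nonfaces n \<Sigma> (l + 1) \<and> linear_quotient_order Fs"
    using flag_nonfaces_linear_quotient_order assms(1,2) by simp
  then show ?thesis
    using finite_in_nonfaces linear_quotients_iff_linear_quotient_order[OF gens(1)] by blast
qed

end
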